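(* Let $\mathcal{C}_{\mathrm{norm}}:=\operatorname{conv}(\{\Sigma_e/\operatorname{Tr}(\Sigma_e)\}_{e\in\mathcal{E}})$ and let $\mathcal{P}_{\mathrm{norm}}$ be the set of distributions $P$ on $\mathbb{R}^{1\times p}$ with $\mathbb{E}_P[\mathbf{x}]=0$, finite second moments, $\mathbb{E}_P\|\mathbf{x}\|_2^2>0$ and $\mathbb{E}_P[\mathbf{x}^\top\mathbf{x}]/\mathbb{E}_P[\|\mathbf{x}\|_2^2]\in\mathcal{C}_{\mathrm{norm}}$. Let $\mathcal{L}$ be one of $\mathcal{L}_{\mathrm{normRCS}}$, $-\mathcal{L}_{\mathrm{normVar}}$, $\mathcal{L}_{\mathrm{normReg}}$ and let $V_k^*\in\arg\min_{V\in\mathcal{O}_{p\times k}}\max_{e\in\mathcal{E}}\mathcal{L}(V;P_e)$ (i.e. $V_k^*$ solves norm-maxRCS, norm-minPCA, norm-maxRegret respectively). Then: (i) for all $V\in\mathcal{O}_{p\times k}$, $\sup_{P\in\mathcal{P}_{\mathrm{norm}}}\mathcal{L}(V;P)=\max_{e\in\mathcal{E}}\mathcal{L}(V;P_e)$; (ii) for all $V,W\in\mathcal{O}_{p\times k}$, if $\max_e\mathcal{L}(V;P_e)<\max_e\mathcal{L}(W;P_e)$ then $\sup_{P\in\mathcal{P}_{\mathrm{norm}}}\mathcal{L}(V;P)<\sup_{P\in\mathcal{P}_{\mathrm{norm}}}\mathcal{L}(W;P)$; (iii) $V_k^*\in\arg\min_{V\in\mathcal{O}_{p\times k}}\sup_{P\in\mathcal{P}_{\mathrm{norm}}}\mathcal{L}(V;P)$;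 (iv) the conclusion of (iii) does not hold in general for the solutions of poolPCA and sepPCA.
   Context: Let $p\ge 1$ and $1\le k\le p$ be integers and $\mathcal{O}_{p\times k}:=\{V\in\mathbb{R}^{p\times k}: V^\top V=I_k\}$. Source domains are $\mathcal{E}=\{1,\dots,E\}$; for each $e$, $P_e$ is a distribution on $\mathbb{R}^{1\times p}$ with mean zero and finite covariance $\Sigma_e=\mathbb{E}[\mathbf{x}^\top\mathbf{x}]$, $\operatorname{Tr}(\Sigma_e)>0$; weights $w_e>0$, $\sum_e w_e=1$. For symmetric PSD $\Sigma$ with positive trace and $V\in\mathcal{O}_{p\times k}$: $\mathcal{L}_{\mathrm{normVar}}(V;\Sigma)=\operatorname{Tr}(V^\top\Sigma V)/\operatorname{Tr}(\Sigma)$, $\mathcal{L}_{\mathrm{normRCS}}(V;\Sigma)=(\operatorname{Tr}(\Sigma)-\operatorname{Tr}(V^\top\Sigma V))/\operatorname{Tr}(\Sigma)$ ($=\mathbb{E}\|\mathbf{x}-\mathbf{x}VV^\top\|_2^2/\mathbb{E}\|\mathbf{x}\|_2^2$), $\mathcal{L}_{\mathrm{normReg}}(V;\Sigma)=\mathcal{L}_{\mathrm{normRCS}}(V;\Sigma)-\min_{W\in\mathcal{O}_{p\times k}}\mathcal{L}_{\mathrm{normRCS}}(W;\Sigma)$; for $P$ with covariance $\Sigma$, $\mathcal{L}(V;P):=\mathcal{L}(V;\Sigma)$. poolPCA: $V^{\mathrm{pool}}\in\arg\max_V\operatorname{Tr}(V^\top(\sum_e w_e\Sigma_e)V)$. sepPCA: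 with $V^{*,e}\in\arg\max_V\operatorname{Tr}(V^\top\Sigma_eV)$ and $e_0$ the smallest index minimizing $\operatorname{Tr}((V^{*,e})^\top\Sigma_eV^{*,e})$, $V^{\mathrm{sep}}:=V^{*,e_0}$. *)

theory Defs
  imports "HOL-Probability.Probability"
begin

text \<open>Row vectors in R^{1 x p} are modelled as real^'p; p x k matrices as real^'k^'p
  (rows indexed by 'p, columns by 'k).\<close>

definition orthSt :: "(real^'k^'p) set" where
  "orthSt = {V. transpose V ** V = mat 1}"

definition cov :: "(real^'p) measure \<Rightarrow> real^'p^'p" where
  "cov M = (\<chi> i j. \<integral>x. (x $ i) * (x $ j) \<partial>M)"

definition centered_dist :: "(real^'p) measure \<Rightarrow> bool" where
  "centered_dist M \<longleftrightarrow> prob_space M \<and> sets M = sets borel \<and>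
     integrable M (\<lambda>x. x) \<and> integrable M (\<lambda>x. (norm x)\<^sup>2) \<and> (\<integral>x. x \<partial>M) = 0"

definition normVar :: "real^'k^'p \<Rightarrow> real^'p^'p \<Rightarrow> real" where
  "normVar V S = trace (transpose V ** S ** V) / trace S"

definition normRCS :: "real^'k^'p \<Rightarrow> real^'p^'p \<Rightarrow> real" where
  "normRCS V S = (trace S - trace (transpose V ** S ** V)) / trace S"

definition normReg :: "real^'k^'p \<Rightarrow> real^'p^'p \<Rightarrow> real" where
  "normReg V S = normRCS V S - (INF W\<in>(orthSt :: (real^'k^'p) set). normRCS W S)"

definition loss_choices :: "(real^'k^'p \<Rightarrow> real^'p^'p \<Rightarrow> real) set" where
  "loss_choices = {normRCS, (\<lambda>V S. - normVar V S), normReg}"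

definition Pnorm :: "(nat \<Rightarrow> (real^'p) measure) \<Rightarrow> nat \<Rightarrow> (real^'p) measure set" where
  "Pnorm P E = {Q. centered_dist Q \<and> (\<integral>x. (norm x)\<^sup>2 \<partial>Q) > 0 \<and>
      (1 / (\<integral>x. (norm x)\<^sup>2 \<partial>Q)) *\<^sub>R cov Q \<in>
        convex hull ((\<lambda>e. (1 / trace (cov (P e))) *\<^sub>R cov (P e)) ` {1..E})}"

definition maxLoss :: "(real^'k^'p \<Rightarrow> real^'p^'p \<Rightarrow> real) \<Rightarrow> (nat \<Rightarrow> (real^'p) measure) \<Rightarrow> nat
    \<Rightarrow> real^'k^'p \<Rightarrow> real" where
  "maxLoss L P E V = Max ((\<lambda>e. L V (cov (P e))) ` {1..E})"

definition supLoss :: "(real^'k^'p \<Rightarrow> real^'p^'p \<Rightarrow> real) \<Rightarrow> (nat \<Rightarrow> (real^'p) measure) \<Rightarrow> nat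
    \<Rightarrow> real^'k^'p \<Rightarrow> real" where
  "supLoss L P E V = (SUP Q\<in>Pnorm P E. L V (cov Q))"

definition argminOn :: "(real^'k^'p) set \<Rightarrow> (real^'k^'p \<Rightarrow> real) \<Rightarrow> (real^'k^'p) set" where
  "argminOn A f = {V\<in>A. \<forall>W\<in>A. f V \<le> f W}"

definition poolPCA_sols :: "(nat \<Rightarrow> (real^'p) measure) \<Rightarrow> (nat \<Rightarrow> real) \<Rightarrow> nat \<Rightarrow> (real^'k^'p) set" where
  "poolPCA_sols P w E = {V\<in>orthSt. \<forall>W\<in>(orthSt :: (real^'k^'p) set).
      trace (transpose W ** (\<Sum>e\<in>{1..E}. w e *\<^sub>R cov (P e)) ** W)
        \<le> trace (transpose V ** (\<Sum>e\<in>{1..E}. w e *\<^sub>R cov (P e)) ** V)}"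

definition pcaSols :: "real^'p^'p \<Rightarrow> (real^'k^'p) set" where
  "pcaSols S = {V\<in>orthSt. \<forall>W\<in>(orthSt :: (real^'k^'p) set). trace (transpose W ** S ** W) \<le> trace (transpose V ** S ** V)}"

text \<open>sepPCA output for a given choice Vs e of per-environment PCA solutions:
  e0 is the smallest index minimising the explained variance.\<close>
definition sepPCA :: "(nat \<Rightarrow> (real^'p) measure) \<Rightarrow> nat \<Rightarrow> (nat \<Rightarrow> real^'k^'p) \<Rightarrow> real^'k^'p" where
  "sepPCA P E Vs = (let f = (\<lambda>e. trace (transpose (Vs e) ** cov (P e) ** Vs e)) in
     Vs (LEAST e. e \<in> {1..E} \<and> (\<forall>e'\<in>{1..E}. f e \<le> f e')))"

definition valid_instance :: "(nat \<Rightarrow> (real^'p) measure) \<Rightarrow> (nat \<Rightarrow> real) \<Rightarrow> nat \<Rightarrow> bool" where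
  "valid_instance P w E \<longleftrightarrow> 1 \<le> E \<and>
     (\<forall>e\<in>{1..E}. centered_dist (P e) \<and> trace (cov (P e)) > 0 \<and> w e > 0) \<and>
     (\<Sum>e\<in>{1..E}. w e) = 1"

end

theory Submission
  imports Defs
begin

(* All three losses are invariant under rescaling of the covariance, and on convex combinations
   of trace-one matrices normRCS and -normVar are affine while normReg (affine minus an infimum
   of affine functions) is convex. The normalized covariance of any P in Pnorm is such a
   combination of the normalized source covariances, so its loss is at most the worst source
   loss; the sources themselves lie in Pnorm, hence sup = max and (ii), (iii) follow.
   For (iv) take p = 2, k = 1 and sources uniform on {e1, -e1} and {e2, -e2} with weights 2/3
   and 1/3: pooled and separate PCA both return the axis e1, whose worst-case loss exceeds that
   of the bisector (e1 + e2)/sqrt 2 by 1/2. *)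

definition expl_var :: "real^'k^'p \<Rightarrow> real^'p^'p \<Rightarrow> real" where
  "expl_var V S = trace (transpose V ** S ** V)"

lemma expl_var_eq_sum:
  "expl_var V S = (\<Sum>a\<in>UNIV. \<Sum>j\<in>UNIV. \<Sum>i\<in>UNIV. V$i$a * S$i$j * V$j$a)"
  unfolding expl_var_def trace_def matrix_matrix_mult_def transpose_def
  by (simp add: sum_distrib_left sum_distrib_right mult.assoc mult.commute mult.left_commute)

lemma linear_expl_var: "linear (expl_var V)"
  by (rule linearI) (simp_all add: expl_var_eq_sum sum.distrib sum_distrib_left algebra_simps)

lemma linear_trace: "linear (trace :: real^'n^'n \<Rightarrow> real)"
  by (rule linearI) (simp_all add: trace_def sum.distrib sum_distrib_left)

lemma linear_sum_scaleR:
  fixes f :: "'a::real_vector \<Rightarrow> real"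
  assumes "linear f"
  shows "f (\<Sum>x\<in>I. u x *\<^sub>R g x) = (\<Sum>x\<in>I. u x * f (g x))"
  using assms by (simp add: linear_sum linear_scale)

lemma abs_orthSt_entry_le_1:
  assumes "V \<in> orthSt" shows "\<bar>V$i$a\<bar> \<le> (1::real)"
proof -
  have "(transpose V ** V)$a$a = 1" using assms by (simp add: orthSt_def mat_def)
  hence col: "(\<Sum>j\<in>UNIV. (V$j$a)\<^sup>2) = 1"
    by (simp add: matrix_matrix_mult_def transpose_def power2_eq_square)
  have "(V$i$a)\<^sup>2 \<le> (\<Sum>j\<in>UNIV. (V$j$a)\<^sup>2)"
    by (rule member_le_sum) auto
  thus ?thesis using col by (simp add: abs_square_le_1)
qed

lemma orthSt_nonempty:
  assumes "CARD('k) \<le> CARD('p)" shows "(orthSt :: (real^'k^'p) set) \<noteq> {}"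
proof -
  obtain f :: "'k \<Rightarrow> 'p" where f: "inj f"
    using card_le_inj[of "UNIV::'k set" "UNIV::'p set"] assms by auto
  define V :: "real^'k^'p" where "V = (\<chi> i j. if i = f j then 1 else 0)"
  have "(transpose V ** V)$a$b = mat 1 $a$b" for a b
  proof -
    have "(transpose V ** V)$a$b = (\<Sum>i\<in>UNIV. (if i = f a then 1 else 0) * (if i = f b then 1 else (0::real)))"
      by (simp add: matrix_matrix_mult_def transpose_def V_def)
    also have "\<dots> = (\<Sum>i\<in>UNIV. if i = f a then (if f a = f b then 1 else 0) else (0::real))"
      by (rule sum.cong) auto
    also have "\<dots> = mat 1 $a$b"
      using f by (auto simp: inj_def mat_def)
    finally show ?thesis .
  qed
  hence "V \<in> orthSt" by (simp add: orthSt_def vec_eq_iff)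
  thus ?thesis by auto
qed

lemma abs_expl_var_le:
  assumes "(W::real^'k^'p) \<in> orthSt"
  shows "\<bar>expl_var W S\<bar> \<le> real CARD('k) * (\<Sum>j\<in>UNIV. \<Sum>i\<in>UNIV. \<bar>S$i$j\<bar>)"
proof -
  have entry: "\<bar>W$i$a * S$i$j * W$j$a\<bar> \<le> \<bar>S$i$j\<bar>" for i j a
  proof -
    have "\<bar>W$i$a * S$i$j * W$j$a\<bar> = \<bar>W$i$a\<bar> * \<bar>S$i$j\<bar> * \<bar>W$j$a\<bar>" by (simp add: abs_mult)
    also have "\<dots> \<le> 1 * \<bar>S$i$j\<bar> * 1"
      using abs_orthSt_entry_le_1[OF assms] by (intro mult_mono) auto
    finally show ?thesis by simp
  qed
  have "\<bar>expl_var W S\<bar> \<le> (\<Sum>a\<in>UNIV. \<Sum>j\<in>UNIV. \<Sum>i\<in>UNIV. \<bar>W$i$a * S$i$j * W$j$a\<bar>)"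
    unfolding expl_var_eq_sum
    by (rule order_trans[OF sum_abs sum_mono], rule order_trans[OF sum_abs sum_mono], rule sum_abs)
  also have "\<dots> \<le> (\<Sum>a\<in>(UNIV::'k set). \<Sum>j\<in>UNIV. \<Sum>i\<in>UNIV. \<bar>S$i$j\<bar>)"
    by (intro sum_mono entry)
  finally show ?thesis by simp
qed

lemma bdd_below_normRCS: "bdd_below ((\<lambda>W. normRCS W S) ` (orthSt :: (real^'k^'p) set))"
proof -
  define B where "B = (\<bar>trace S\<bar> + real CARD('k) * (\<Sum>j\<in>UNIV. \<Sum>i\<in>UNIV. \<bar>S$i$j\<bar>)) / \<bar>trace S\<bar>"
  have "- B \<le> normRCS W S" if "W \<in> orthSt" for W :: "real^'k^'p"
  proof -
    have "\<bar>trace S - expl_var W S\<bar> \<le> \<bar>trace S\<bar> + real CARD('k) * (\<Sum>j\<in>UNIV. \<Sum>i\<in>UNIV. \<bar>S$i$j\<bar>)"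
      using abs_expl_var_le[OF that, of S] by linarith
    hence "\<bar>normRCS W S\<bar> \<le> B"
      unfolding normRCS_def expl_var_def[symmetric] B_def abs_divide
      by (intro divide_right_mono) auto
    thus ?thesis by linarith
  qed
  thus ?thesis by (auto simp: bdd_below_def)
qed

lemma normRCS_scaleR: "c > 0 \<Longrightarrow> normRCS V (c *\<^sub>R S) = normRCS V S"
  unfolding normRCS_def expl_var_def[symmetric] linear_scale[OF linear_expl_var] linear_scale[OF linear_trace]
  by (cases "trace S = 0") (simp_all add: field_simps)

lemma normVar_scaleR: "c > 0 \<Longrightarrow> normVar V (c *\<^sub>R S) = normVar V S"
  unfolding normVar_def expl_var_def[symmetric] linear_scale[OF linear_expl_var] linear_scale[OF linear_trace]
  by (cases "trace S = 0") (simp_all add: field_simps)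

lemma loss_choices_scaleR: "L \<in> loss_choices \<Longrightarrow> c > 0 \<Longrightarrow> L V (c *\<^sub>R S) = L V S"
  unfolding loss_choices_def normReg_def by (auto simp: normRCS_scaleR normVar_scaleR)

context
  fixes I :: "(real^'p^'p) set" and u :: "real^'p^'p \<Rightarrow> real"
  assumes trace_one: "\<forall>S\<in>I. trace S = 1" and sum_one: "sum u I = 1"
begin

lemma trace_convex_comb: "trace (\<Sum>S\<in>I. u S *\<^sub>R S) = 1"
  using linear_sum_scaleR[OF linear_trace, of u id I] trace_one sum_one by simp

lemma normVar_convex_comb: "normVar V (\<Sum>S\<in>I. u S *\<^sub>R S) = (\<Sum>S\<in>I. u S * normVar V S)"
  using linear_sum_scaleR[OF linear_expl_var, of V u id I] trace_one
  by (simp add: normVar_def expl_var_def[symmetric] trace_convex_comb)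

lemma normRCS_convex_comb: "normRCS V (\<Sum>S\<in>I. u S *\<^sub>R S) = (\<Sum>S\<in>I. u S * normRCS V S)"
proof -
  have "normRCS V S = 1 - normVar V S" if "S \<in> I" for S
    using trace_one that by (simp add: normRCS_def normVar_def diff_divide_distrib)
  moreover have "normRCS V (\<Sum>S\<in>I. u S *\<^sub>R S) = 1 - normVar V (\<Sum>S\<in>I. u S *\<^sub>R S)"
    by (simp add: normRCS_def normVar_def trace_convex_comb)
  ultimately show ?thesis
    using sum_one by (simp add: normVar_convex_comb right_diff_distrib sum_subtractf)
qed

text \<open>The optimum subtracted in normReg is an infimum of functions that are affine on
  convex combinations of trace-one matrices, hence concave there.\<close>
lemma normReg_convex_comb_le:
  assumes nonneg: "\<forall>S\<in>I. u S \<ge> 0" and ne: "(orthSt :: (real^'k^'p) set) \<noteq> {}"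
  shows "normReg (V::real^'k^'p) (\<Sum>S\<in>I. u S *\<^sub>R S) \<le> (\<Sum>S\<in>I. u S * normReg V S)"
proof -
  define opt where "opt S = (INF W\<in>(orthSt :: (real^'k^'p) set). normRCS W S)" for S
  have "(\<Sum>S\<in>I. u S * opt S) \<le> (INF W\<in>(orthSt :: (real^'k^'p) set). normRCS W (\<Sum>S\<in>I. u S *\<^sub>R S))"
  proof (rule cINF_greatest[OF ne])
    fix W :: "real^'k^'p" assume W: "W \<in> orthSt"
    have "(\<Sum>S\<in>I. u S * opt S) \<le> (\<Sum>S\<in>I. u S * normRCS W S)"
      unfolding opt_def
      using nonneg cINF_lower[OF bdd_below_normRCS W] by (intro sum_mono mult_left_mono) auto
    thus "(\<Sum>S\<in>I. u S * opt S) \<le> normRCS W (\<Sum>S\<in>I. u S *\<^sub>R S)"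
      by (simp add: normRCS_convex_comb)
  qed
  thus ?thesis
    unfolding normReg_def opt_def[symmetric]
    by (simp add: normRCS_convex_comb right_diff_distrib sum_subtractf)
qed

lemma loss_choices_convex_comb_le:
  assumes "L \<in> loss_choices" and "\<forall>S\<in>I. u S \<ge> 0" and "(orthSt :: (real^'k^'p) set) \<noteq> {}"
  shows "L (V::real^'k^'p) (\<Sum>S\<in>I. u S *\<^sub>R S) \<le> (\<Sum>S\<in>I. u S * L V S)"
  using assms normReg_convex_comb_le[OF assms(2,3)]
  by (auto simp: loss_choices_def normRCS_convex_comb normVar_convex_comb sum_negf)

end

lemma trace_cov:
  assumes "centered_dist M" shows "trace (cov M) = (\<integral>x. (norm x)\<^sup>2 \<partial>M)"
proof -
  have sets: "sets M = sets borel" and int: "integrable M (\<lambda>x. (norm x)\<^sup>2)"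
    using assms by (auto simp: centered_dist_def)
  have "integrable M (\<lambda>x. x$i * x$i)" for i
  proof (rule Bochner_Integration.integrable_bound[OF int])
    show "(\<lambda>x. x$i * x$i) \<in> borel_measurable M"
      unfolding measurable_cong_sets[OF sets refl] by (intro borel_measurable_continuous_onI continuous_intros)
    have "\<bar>x$i\<bar> * \<bar>x$i\<bar> \<le> norm x * norm x" for x :: "real^'a"
      using component_le_norm_cart[of x i] by (intro mult_mono) auto
    thus "AE x in M. norm (x$i * x$i) \<le> norm ((norm x)\<^sup>2)"
      by (simp add: abs_mult power2_eq_square)
  qed
  hence "(\<integral>x. (\<Sum>i\<in>UNIV. x$i * x$i) \<partial>M) = (\<Sum>i\<in>UNIV. \<integral>x. x$i * x$i \<partial>M)"
    by (rule Bochner_Integration.integral_sum)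
  thus ?thesis
    by (simp add: trace_def cov_def dot_square_norm[symmetric] inner_vec_def)
qed

lemma trace_normalized_cov:
  assumes "valid_instance P w E" and "e \<in> {1..E}"
  shows "trace ((1 / trace (cov (P e))) *\<^sub>R cov (P e)) = 1"
proof -
  have "trace (cov (P e)) > 0" using assms by (simp add: valid_instance_def)
  thus ?thesis by (simp add: linear_scale[OF linear_trace])
qed

lemma source_in_Pnorm:
  assumes inst: "valid_instance P w E" and e: "e \<in> {1..E}"
  shows "P e \<in> Pnorm P E"
proof -
  have centered: "centered_dist (P e)" and "trace (cov (P e)) > 0"
    using inst e by (auto simp: valid_instance_def)
  moreover have "(1 / trace (cov (P e))) *\<^sub>R cov (P e)
      \<in> convex hull ((\<lambda>e. (1 / trace (cov (P e))) *\<^sub>R cov (P e)) ` {1..E})"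
    using e by (intro hull_inc) blast
  ultimately show ?thesis by (simp add: Pnorm_def trace_cov[OF centered, symmetric])
qed

lemma loss_le_maxLoss_of_Pnorm:
  fixes P :: "nat \<Rightarrow> (real^'p) measure" and V :: "real^'k^'p"
  assumes inst: "valid_instance P w E" and L: "L \<in> loss_choices"
    and ne: "(orthSt :: (real^'k^'p) set) \<noteq> {}" and Q: "Q \<in> Pnorm P E"
  shows "L V (cov Q) \<le> maxLoss L P E V"
proof -
  define I where "I = (\<lambda>e. (1 / trace (cov (P e))) *\<^sub>R cov (P e)) ` {1..E}"
  define c where "c = (\<integral>x. (norm x)\<^sup>2 \<partial>Q)"
  have c: "c > 0" and "(1 / c) *\<^sub>R cov Q \<in> convex hull I"
    using Q unfolding Pnorm_def c_def I_def by auto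
  moreover have "finite I" unfolding I_def by simp
  ultimately obtain u where u_nonneg: "\<forall>S\<in>I. 0 \<le> u S" and u_sum: "sum u I = 1"
    and u_comb: "(\<Sum>S\<in>I. u S *\<^sub>R S) = (1 / c) *\<^sub>R cov Q"
    by (auto simp: convex_hull_finite)
  have trace_one: "\<forall>S\<in>I. trace S = 1"
    using trace_normalized_cov[OF inst] unfolding I_def by blast
  have source_le: "L V S \<le> maxLoss L P E V" if "S \<in> I" for S
  proof -
    obtain e where e: "e \<in> {1..E}" and S: "S = (1 / trace (cov (P e))) *\<^sub>R cov (P e)"
      using \<open>S \<in> I\<close> unfolding I_def by auto
    have "L V S = L V (cov (P e))"
      unfolding S using inst e by (simp add: loss_choices_scaleR[OF L] valid_instance_def)
    also have "\<dots> \<le> maxLoss L P E V"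
      unfolding maxLoss_def using e by (intro Max_ge) auto
    finally show ?thesis .
  qed
  have "L V (cov Q) = L V (\<Sum>S\<in>I. u S *\<^sub>R S)"
    using c by (simp add: u_comb loss_choices_scaleR[OF L])
  also have "\<dots> \<le> (\<Sum>S\<in>I. u S * L V S)"
    by (rule loss_choices_convex_comb_le[OF trace_one u_sum L u_nonneg ne])
  also have "\<dots> \<le> (\<Sum>S\<in>I. u S * maxLoss L P E V)"
    using u_nonneg source_le by (intro sum_mono mult_left_mono) auto
  also have "\<dots> = maxLoss L P E V"
    using u_sum by (simp add: sum_distrib_right[symmetric])
  finally show ?thesis .
qed

lemma supLoss_eq_maxLoss:
  fixes P :: "nat \<Rightarrow> (real^'p) measure" and V :: "real^'k^'p"
  assumes inst: "valid_instance P w E" and L: "L \<in> loss_choices"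
    and ne: "(orthSt :: (real^'k^'p) set) \<noteq> {}"
  shows "supLoss L P E V = maxLoss L P E V"
proof -
  have "maxLoss L P E V \<in> (\<lambda>e. L V (cov (P e))) ` {1..E}"
    unfolding maxLoss_def using inst by (intro Max_in) (auto simp: valid_instance_def)
  then obtain e where e: "e \<in> {1..E}" and max: "maxLoss L P E V = L V (cov (P e))" by auto
  show ?thesis unfolding supLoss_def
  proof (rule cSup_eq_maximum)
    show "maxLoss L P E V \<in> (\<lambda>Q. L V (cov Q)) ` Pnorm P E"
      using max source_in_Pnorm[OF inst e] by auto
  qed (use loss_le_maxLoss_of_Pnorm[OF inst L ne] in auto)
qed

definition sym_two_point :: "real^'n \<Rightarrow> (real^'n) measure" where
  "sym_two_point v = distr (measure_pmf (bernoulli_pmf (1/2))) borel (\<lambda>b. if b then v else -v)"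

lemma measurable_sym_two_point:
  "(\<lambda>b. if b then v else -v) \<in> measurable (measure_pmf (bernoulli_pmf (1/2))) borel"
  by simp

lemma integrable_sym_two_point:
  assumes "f \<in> borel_measurable borel"
  shows "integrable (sym_two_point v) (f :: _ \<Rightarrow> 'b::{banach, second_countable_topology})"
  unfolding sym_two_point_def
  by (subst integrable_distr_eq[OF measurable_sym_two_point assms])
     (rule integrable_measure_pmf_finite, simp)

lemma integral_sym_two_point:
  fixes f :: "real^'n \<Rightarrow> 'b::{banach, second_countable_topology}"
  assumes "f \<in> borel_measurable borel"
  shows "(\<integral>x. f x \<partial>sym_two_point v) = (1/2) *\<^sub>R (f v + f (-v))"
  unfolding sym_two_point_def integral_distr[OF measurable_sym_two_point assms]
  by (subst integral_measure_pmf[of UNIV]) (auto simp: UNIV_bool scaleR_add_right)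

lemma centered_dist_sym_two_point: "centered_dist (sym_two_point (v::real^'n))"
  unfolding centered_dist_def
proof (intro conjI)
  show "prob_space (sym_two_point v)" unfolding sym_two_point_def
    by (rule prob_space.prob_space_distr[OF prob_space_measure_pmf measurable_sym_two_point])
  show "sets (sym_two_point v) = sets borel" by (simp add: sym_two_point_def)
qed (simp_all add: integrable_sym_two_point integral_sym_two_point)

lemma cov_sym_two_point: "cov (sym_two_point (v::real^'n)) = (\<chi> i j. v$i * v$j)"
  by (simp add: cov_def integral_sym_two_point)

definition diag2 :: "real \<Rightarrow> real \<Rightarrow> real^2^2" where
  "diag2 a b = (\<chi> i j. if i = 1 \<and> j = 1 then a else if i = 2 \<and> j = 2 then b else 0)"

lemma trace_diag2: "trace (diag2 a b) = a + b"
  by (simp add: trace_def sum_2 diag2_def)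

lemma expl_var_diag2: "expl_var (V::real^1^2) (diag2 a b) = a * (V$1$1)\<^sup>2 + b * (V$2$1)\<^sup>2"
  by (simp add: expl_var_eq_sum sum_2 diag2_def power2_eq_square)

lemma orthSt_iff_2_1: "(V::real^1^2) \<in> orthSt \<longleftrightarrow> (V$1$1)\<^sup>2 + (V$2$1)\<^sup>2 = 1"
  by (simp add: orthSt_def vec_eq_iff matrix_matrix_mult_def transpose_def sum_2 mat_def power2_eq_square)

lemma expl_var_diag2_le:
  assumes "(V::real^1^2) \<in> orthSt" shows "expl_var V (diag2 a b) \<le> max a b"
proof -
  have "max a b = max a b * (V$1$1)\<^sup>2 + max a b * (V$2$1)\<^sup>2"
    using assms unfolding orthSt_iff_2_1 by (metis distrib_left mult.right_neutral)
  moreover have "a * (V$1$1)\<^sup>2 \<le> max a b * (V$1$1)\<^sup>2" "b * (V$2$1)\<^sup>2 \<le> max a b * (V$2$1)\<^sup>2"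
    by (simp_all add: mult_right_mono)
  ultimately show ?thesis unfolding expl_var_diag2 by linarith
qed

lemma expl_var_diag2_attains: "\<exists>W::real^1^2. W \<in> orthSt \<and> expl_var W (diag2 a b) = max a b"
proof (cases "b \<le> a")
  case True
  then show ?thesis
    by (intro exI[of _ "\<chi> i j. if i = 1 then 1 else 0"]) (simp add: orthSt_iff_2_1 expl_var_diag2)
next
  case False
  then show ?thesis
    by (intro exI[of _ "\<chi> i j. if i = 2 then 1 else 0"]) (simp add: orthSt_iff_2_1 expl_var_diag2)
qed

lemma pcaSols_diag2:
  assumes "(V::real^1^2) \<in> pcaSols (diag2 a b)"
  shows "expl_var V (diag2 a b) = max a b" and "b < a \<Longrightarrow> V$2$1 = 0"
proof -
  obtain W :: "real^1^2" where "W \<in> orthSt" "expl_var W (diag2 a b) = max a b"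
    using expl_var_diag2_attains by blast
  moreover have V: "V \<in> orthSt" and "\<forall>W::real^1^2\<in>orthSt. expl_var W (diag2 a b) \<le> expl_var V (diag2 a b)"
    using assms by (auto simp: pcaSols_def expl_var_def)
  ultimately show max: "expl_var V (diag2 a b) = max a b"
    using expl_var_diag2_le[OF V, of a b] by (metis order_antisym)
  assume "b < a"
  have "(a - b) * (V$2$1)\<^sup>2 = a * ((V$1$1)\<^sup>2 + (V$2$1)\<^sup>2) - expl_var V (diag2 a b)"
    unfolding expl_var_diag2 by (simp add: algebra_simps)
  also have "\<dots> = 0"
    using V max \<open>b < a\<close> unfolding orthSt_iff_2_1 by simp
  finally have "(a - b) * (V$2$1)\<^sup>2 = 0" .
  with \<open>b < a\<close> show "V$2$1 = 0" by simp
qed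

lemma INF_normRCS_diag2:
  assumes "a + b > 0"
  shows "(INF W\<in>(orthSt :: (real^1^2) set). normRCS W (diag2 a b)) = (a + b - max a b) / (a + b)"
proof (rule cInf_eq_minimum)
  obtain W :: "real^1^2" where "W \<in> orthSt" "expl_var W (diag2 a b) = max a b"
    using expl_var_diag2_attains by blast
  thus "(a + b - max a b) / (a + b) \<in> (\<lambda>W. normRCS W (diag2 a b)) ` (orthSt :: (real^1^2) set)"
    by (force simp: normRCS_def expl_var_def[symmetric] trace_diag2)
next
  fix r assume "r \<in> (\<lambda>W. normRCS W (diag2 a b)) ` (orthSt :: (real^1^2) set)"
  then obtain W :: "real^1^2" where "W \<in> orthSt" "r = normRCS W (diag2 a b)" by blast
  thus "(a + b - max a b) / (a + b) \<le> r"
    using expl_var_diag2_le assms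
    by (simp add: normRCS_def expl_var_def[symmetric] trace_diag2 divide_right_mono)
qed

lemma loss_choices_diag2:
  assumes "L \<in> loss_choices"
  obtains c where "\<And>V::real^1^2. L V (diag2 1 0) = c - (V$1$1)\<^sup>2 \<and> L V (diag2 0 1) = c - (V$2$1)\<^sup>2"
proof -
  have RCS: "normRCS V (diag2 a b) = 1 - expl_var V (diag2 a b)" if "a + b = 1" for V :: "real^1^2" and a b
    using that by (simp add: normRCS_def expl_var_def[symmetric] trace_diag2)
  have Var: "normVar V (diag2 a b) = expl_var V (diag2 a b)" if "a + b = 1" for V :: "real^1^2" and a b
    using that by (simp add: normVar_def expl_var_def[symmetric] trace_diag2)
  have Reg: "normReg V (diag2 a b) = normRCS V (diag2 a b)" if "a + b = 1" "max a b = 1"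
    for V :: "real^1^2" and a b
    using that by (simp add: normReg_def INF_normRCS_diag2)
  from assms consider "L = normRCS" | "L = (\<lambda>V S. - normVar V S)" | "L = normReg"
    unfolding loss_choices_def by blast
  then show ?thesis
  proof cases
    case 1
    then show ?thesis by (intro that[of 1]) (simp add: RCS expl_var_diag2)
  next
    case 2
    then show ?thesis by (intro that[of 0]) (simp add: Var expl_var_diag2)
  next
    case 3
    then show ?thesis by (intro that[of 1]) (simp add: Reg RCS expl_var_diag2)
  qed
qed

definition P_ex :: "nat \<Rightarrow> (real^2) measure" where
  "P_ex e = sym_two_point (axis (if e = 1 then 1 else 2) 1)"

definition w_ex :: "nat \<Rightarrow> real" where
  "w_ex e = (if e = 1 then 2/3 else 1/3)"

lemma atLeastAtMost_1_2: "{1..2::nat} = {1, 2}"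
  by auto

lemma cov_P_ex: "cov (P_ex e) = (if e = 1 then diag2 1 0 else diag2 0 1)"
  by (simp add: P_ex_def cov_sym_two_point diag2_def axis_def vec_eq_iff forall_2)

lemma valid_instance_ex: "valid_instance P_ex w_ex 2"
proof -
  have "centered_dist (P_ex e)" for e
    by (simp add: P_ex_def centered_dist_sym_two_point)
  thus ?thesis
    unfolding valid_instance_def atLeastAtMost_1_2 by (simp add: cov_P_ex trace_diag2 w_ex_def)
qed

lemma maxLoss_ex: "maxLoss L P_ex 2 V = max (L V (diag2 1 0)) (L V (diag2 0 1))"
  unfolding maxLoss_def atLeastAtMost_1_2 by (simp add: cov_P_ex)

lemma poolPCA_sols_ex: "poolPCA_sols P_ex w_ex 2 = pcaSols (diag2 (2/3) (1/3))"
proof -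
  have "(\<Sum>e\<in>{1..2}. w_ex e *\<^sub>R cov (P_ex e)) = diag2 (2/3) (1/3)"
    unfolding atLeastAtMost_1_2 by (simp add: w_ex_def cov_P_ex diag2_def vec_eq_iff)
  thus ?thesis by (simp add: poolPCA_sols_def pcaSols_def)
qed

lemma sepPCA_ex:
  fixes Vs :: "nat \<Rightarrow> real^1^2"
  assumes "\<forall>e\<in>{1..2}. Vs e \<in> pcaSols (cov (P_ex e))"
  shows "sepPCA P_ex 2 Vs = Vs 1"
proof -
  define f where "f e = trace (transpose (Vs e) ** cov (P_ex e) ** Vs e)" for e
  have "Vs 1 \<in> pcaSols (diag2 1 0)" "Vs 2 \<in> pcaSols (diag2 0 1)"
    using assms unfolding atLeastAtMost_1_2 by (simp_all add: cov_P_ex)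
  from this[THEN pcaSols_diag2(1)] have "f 1 = 1" "f 2 = 1"
    by (simp_all add: f_def expl_var_def[symmetric] cov_P_ex)
  \<comment> \<open>both sources are fully explained by their own PCA, so the tie is broken towards e = 1\<close>
  hence "(LEAST e. e \<in> {1..2} \<and> (\<forall>e'\<in>{1..2}. f e \<le> f e')) = (1::nat)"
    unfolding atLeastAtMost_1_2 by (intro Least_equality) auto
  thus ?thesis by (simp add: sepPCA_def f_def)
qed

lemma not_argmin_ex:
  fixes L :: "real^1^2 \<Rightarrow> real^2^2 \<Rightarrow> real"
  assumes L: "L \<in> loss_choices" and V: "V \<in> orthSt" and "V$2$1 = 0"
  shows "V \<notin> argminOn orthSt (supLoss L P_ex 2)"
proof
  define U :: "real^1^2" where "U = (\<chi> i j. sqrt 2 / 2)"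
  have U: "U \<in> orthSt" "(U$1$1)\<^sup>2 = 1/2" "(U$2$1)\<^sup>2 = 1/2"
    by (simp_all add: orthSt_iff_2_1 U_def power_divide)
  obtain c where c: "\<And>V::real^1^2. L V (diag2 1 0) = c - (V$1$1)\<^sup>2 \<and> L V (diag2 0 1) = c - (V$2$1)\<^sup>2"
    using loss_choices_diag2[OF L] by blast
  have sup_eq: "supLoss L P_ex 2 W = max (L W (diag2 1 0)) (L W (diag2 0 1))" for W :: "real^1^2"
    using supLoss_eq_maxLoss[OF valid_instance_ex L orthSt_nonempty] by (simp add: maxLoss_ex)
  assume "V \<in> argminOn orthSt (supLoss L P_ex 2)"
  hence "supLoss L P_ex 2 V \<le> supLoss L P_ex 2 U"
    using U by (auto simp: argminOn_def)
  moreover have "(V$1$1)\<^sup>2 = 1" using V \<open>V$2$1 = 0\<close> by (simp add: orthSt_iff_2_1)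
  ultimately show False
    using U \<open>V$2$1 = 0\<close> by (simp add: sup_eq c)
qed

lemma pooled_and_separate_PCA_not_minimax:
  fixes L :: "real^1^2 \<Rightarrow> real^2^2 \<Rightarrow> real"
  assumes L: "L \<in> loss_choices"
  shows "\<exists>P w E. valid_instance P w E \<and>
           (\<forall>V\<in>poolPCA_sols P w E. V \<notin> argminOn orthSt (supLoss L P E))"
    and "\<exists>P w E. valid_instance P w E \<and>
           (\<forall>Vs :: nat \<Rightarrow> real^1^2. (\<forall>e\<in>{1..E}. Vs e \<in> pcaSols (cov (P e))) \<longrightarrow>
              sepPCA P E Vs \<notin> argminOn orthSt (supLoss L P E))"
proof -
  have "V \<notin> argminOn orthSt (supLoss L P_ex 2)" if "V \<in> poolPCA_sols P_ex w_ex 2" for V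
    using that pcaSols_diag2(2)[of V "2/3" "1/3"] not_argmin_ex[OF L]
    by (simp add: poolPCA_sols_ex pcaSols_def)
  thus "\<exists>P w E. valid_instance P w E \<and>
           (\<forall>V\<in>poolPCA_sols P w E. V \<notin> argminOn orthSt (supLoss L P E))"
    using valid_instance_ex by blast
next
  have "sepPCA P_ex 2 Vs \<notin> argminOn orthSt (supLoss L P_ex 2)"
    if "\<forall>e\<in>{1..2}. Vs e \<in> pcaSols (cov (P_ex e))" for Vs :: "nat \<Rightarrow> real^1^2"
  proof -
    have "Vs 1 \<in> pcaSols (diag2 1 0)"
      using that unfolding atLeastAtMost_1_2 by (simp add: cov_P_ex)
    thus ?thesis
      using pcaSols_diag2(2)[of "Vs 1" 1 0] not_argmin_ex[OF L]
      by (simp add: sepPCA_ex[OF that] pcaSols_def)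
  qed
  thus "\<exists>P w E. valid_instance P w E \<and>
           (\<forall>Vs :: nat \<Rightarrow> real^1^2. (\<forall>e\<in>{1..E}. Vs e \<in> pcaSols (cov (P e))) \<longrightarrow>
              sepPCA P E Vs \<notin> argminOn orthSt (supLoss L P E))"
    using valid_instance_ex by blast
qed

theorem mainTheorem3:
  fixes P :: "nat \<Rightarrow> (real^'p) measure" and w :: "nat \<Rightarrow> real" and E :: nat
    and L :: "real^'k^'p \<Rightarrow> real^'p^'p \<Rightarrow> real" and Vstar :: "real^'k^'p"
  assumes kp: "CARD('k) \<le> CARD('p)"
    and inst: "valid_instance P w E"
    and L: "L \<in> loss_choices"
    and Vstar: "Vstar \<in> argminOn orthSt (maxLoss L P E)"
  shows
    "(\<forall>V\<in>orthSt. supLoss L P E V = maxLoss L P E V)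
   \<and> (\<forall>V\<in>orthSt. \<forall>W\<in>orthSt. maxLoss L P E V < maxLoss L P E W \<longrightarrow> supLoss L P E V < supLoss L P E W)
   \<and> Vstar \<in> argminOn orthSt (supLoss L P E)
   \<and> (\<forall>L' \<in> (loss_choices :: (real^1^2 \<Rightarrow> real^2^2 \<Rightarrow> real) set).
        (\<exists>(P' :: nat \<Rightarrow> (real^2) measure) w' E'. valid_instance P' w' E' \<and>
           (\<forall>V\<in>poolPCA_sols P' w' E'. V \<notin> argminOn orthSt (supLoss L' P' E'))) \<and>
        (\<exists>(P' :: nat \<Rightarrow> (real^2) measure) w' E'. valid_instance P' w' E' \<and>
           (\<forall>Vs :: nat \<Rightarrow> real^1^2. (\<forall>e\<in>{1..E'}. Vs e \<in> pcaSols (cov (P' e))) \<longrightarrow>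
              sepPCA P' E' Vs \<notin> argminOn orthSt (supLoss L' P' E'))))"
proof (intro conjI)
  have "(orthSt :: (real^'k^'p) set) \<noteq> {}" by (rule orthSt_nonempty[OF kp])
  then show sup_max: "\<forall>V\<in>orthSt. supLoss L P E V = maxLoss L P E V"
    using supLoss_eq_maxLoss[OF inst L] by blast
  then show "\<forall>V\<in>orthSt. \<forall>W\<in>orthSt. maxLoss L P E V < maxLoss L P E W \<longrightarrow> supLoss L P E V < supLoss L P E W"
    by simp
  show "Vstar \<in> argminOn orthSt (supLoss L P E)"
    using Vstar sup_max by (simp add: argminOn_def)
qed (use pooled_and_separate_PCA_not_minimax in blast)+

end
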